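(* Let $F$ be an unsatisfiable formula and $\mathcal{P}$ a subproblem for $F$ admitting a compatible proof. Then every compatible proof $(L^0,\dots,L^n)$ of $\mathcal{P}$ contains at least $$\min\{\#S - 1 \mid S \subseteq \mathrm{Frontier}[\mathrm{Known}(\mathcal{P})],\ S \text{ is unsatisfiable}\}$$ clauses in $L^0 \cup \cdots \cup L^n$ that do not belong to $\mathrm{Known}(\mathcal{P})$.
   Context: Clauses are finite sets of literals without complementary pairs; $\bot$ is the empty clause; a formula (set of clauses) is unsatisfiable if no truth assignment satisfies all its clauses. Resolution: for $A = C' \cup \{x\}$, $B = C'' \cup \{\bar{x}\}$ with $C' \cup C''$ containing no complementary pair, $A \diamond B := C' \cup C''$. The frontier of a set of clauses $G$ is $\mathrm{Frontier}[G] := \{\omega \in G \mid \text{there is no } \omega' \in G \text{ with } \omega' \subsetneq \omega\}$. Layer list on an unsatisfiable formula $F$: a sequence $(L^0,\dots,L^n)$, $n\ge 1$, of sets of clauses with $L^j\neq\emptyset$ for $j \ge 1$, such that (1) $L^0 = F$; (2) $\bot \in L^k$ for some $1 \le k \le n$; (3) for all $1\le j\le n$, every $\omega \in L^j$ equals $\omega'\diamond\omega''$ for some $\omega' \in L^{j-1}$, $\omega'' \in L^0\cup\cdots\cup L^{j-1}$; (4) for all $1 \le k < j \le n$, no $\omega \in L^j$ equals $\omega'\diamond\omega''$ with $\omega' \in L^{k-1}$, $\omega'' \in L^0\cup\cdots\cup L^{k-1}$. A subproblem for $F$ is a tuple $\mathcal{P} = (\mathrm{Prev}, \mathrm{Cur},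 \mathrm{Next}, \mathrm{Forg})$ of four sets of clauses; $\mathrm{Known}(\mathcal{P}) = \mathrm{Prev} \cup \mathrm{Cur} \cup \mathrm{Next}$. A compatible proof of $\mathcal{P}$ is a layer list $(L^0,\dots,L^n)$ on $F$ such that for some index $k < n$: $L^k = \mathrm{Cur}$, $L^0 \cup \cdots \cup L^{k-1} = \mathrm{Prev}$, $L^{k+1} \supseteq \mathrm{Next}$, and no clause of $\mathrm{Forg}$ occurs in any layer. *)

theory Defs
  imports Main
begin

datatype 'v lit = Pos 'v | Neg 'v

fun compl :: "'v lit \<Rightarrow> 'v lit" where
  "compl (Pos v) = Neg v"
| "compl (Neg v) = Pos v"

type_synonym 'v clause = "'v lit set"

definition no_compl_pair :: "'v clause \<Rightarrow> bool" where
  "no_compl_pair C \<longleftrightarrow> (\<forall>l\<in>C. compl l \<notin> C)"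

definition is_clause :: "'v clause \<Rightarrow> bool" where
  "is_clause C \<longleftrightarrow> finite C \<and> no_compl_pair C"

definition is_formula :: "'v clause set \<Rightarrow> bool" where
  "is_formula F \<longleftrightarrow> finite F \<and> (\<forall>C\<in>F. is_clause C)"

fun lit_true :: "('v \<Rightarrow> bool) \<Rightarrow> 'v lit \<Rightarrow> bool" where
  "lit_true a (Pos v) = a v"
| "lit_true a (Neg v) = (\<not> a v)"

definition satisfiable :: "'v clause set \<Rightarrow> bool" where
  "satisfiable F \<longleftrightarrow> (\<exists>a. \<forall>C\<in>F. \<exists>l\<in>C. lit_true a l)"

definition unsatisfiable :: "'v clause set \<Rightarrow> bool" where
  "unsatisfiable F \<longleftrightarrow> \<not> satisfiable F"

definition is_resolvent :: "'v clause \<Rightarrow> 'v clause \<Rightarrow> 'v clause \<Rightarrow> bool" where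
  "is_resolvent w A B \<longleftrightarrow> (\<exists>x. x \<in> A \<and> compl x \<in> B \<and>
      no_compl_pair ((A - {x}) \<union> (B - {compl x})) \<and>
      w = (A - {x}) \<union> (B - {compl x}))"

definition frontier :: "'v clause set \<Rightarrow> 'v clause set" where
  "frontier G = {w \<in> G. \<not> (\<exists>w'\<in>G. w' \<subset> w)}"

definition layer_list :: "'v clause set \<Rightarrow> (nat \<Rightarrow> 'v clause set) \<Rightarrow> nat \<Rightarrow> bool" where
  "layer_list F L n \<longleftrightarrow>
     n \<ge> 1 \<and>
     (\<forall>j. 1 \<le> j \<and> j \<le> n \<longrightarrow> L j \<noteq> {}) \<and>
     L 0 = F \<and>
     (\<exists>k. 1 \<le> k \<and> k \<le> n \<and> {} \<in> L k) \<and>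
     (\<forall>j. 1 \<le> j \<and> j \<le> n \<longrightarrow>
        (\<forall>w\<in>L j. \<exists>w'\<in>L (j - 1). \<exists>w''\<in>(\<Union>i<j. L i). is_resolvent w w' w'')) \<and>
     (\<forall>k j. 1 \<le> k \<and> k < j \<and> j \<le> n \<longrightarrow>
        \<not> (\<exists>w\<in>L j. \<exists>w'\<in>L (k - 1). \<exists>w''\<in>(\<Union>i<k. L i). is_resolvent w w' w''))"

definition Known :: "'v clause set \<Rightarrow> 'v clause set \<Rightarrow> 'v clause set \<Rightarrow> 'v clause set" where
  "Known Prev Cur Next = Prev \<union> Cur \<union> Next"

definition compatible_proof ::
  "'v clause set \<Rightarrow> 'v clause set \<Rightarrow> 'v clause set \<Rightarrow> 'v clause set \<Rightarrow> 'v clause set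
   \<Rightarrow> (nat \<Rightarrow> 'v clause set) \<Rightarrow> nat \<Rightarrow> bool" where
  "compatible_proof F Prev Cur Next Forg L n \<longleftrightarrow>
     layer_list F L n \<and>
     (\<exists>k<n. L k = Cur \<and> (\<Union>i<k. L i) = Prev \<and> Next \<subseteq> L (k + 1) \<and>
            (\<forall>j\<le>n. L j \<inter> Forg = {}))"

end

theory Submission
  imports Defs
begin

text \<open>Rank every clause of the proof by the first layer it occurs in. A clause outside
  Known(P) is not in F, so it is the resolvent of two clauses of strictly smaller rank.
  Unfolding the derivation of the empty clause backwards, always expanding a derived
  clause of maximal rank, replaces one clause by at most two per derived clause and
  ends in a set of at most (number of derived clauses) + 1 clauses of Known(P) that
  entails the empty clause, i.e. is unsatisfiable. Shrinking each of its clauses to a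
  subclause in the frontier keeps it unsatisfiable and does not increase its size.\<close>

definition satisfies :: "('v \<Rightarrow> bool) \<Rightarrow> 'v clause set \<Rightarrow> bool" where
  "satisfies a F \<longleftrightarrow> (\<forall>C\<in>F. \<exists>l\<in>C. lit_true a l)"

lemma satisfies_empty [simp]: "satisfies a {}"
  and satisfies_insert [simp]: "satisfies a (insert C F) \<longleftrightarrow> (\<exists>l\<in>C. lit_true a l) \<and> satisfies a F"
  unfolding satisfies_def by auto

lemma unsatisfiable_iff_satisfies: "unsatisfiable F \<longleftrightarrow> (\<forall>a. \<not> satisfies a F)"
  unfolding unsatisfiable_def satisfiable_def satisfies_def by blast

lemma lit_true_compl [simp]: "lit_true a (compl l) \<longleftrightarrow> \<not> lit_true a l"
  by (cases l) auto

lemma is_resolvent_sound: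
  assumes "is_resolvent d A B" "satisfies a {A, B}"
  shows "satisfies a {d}"
proof -
  obtain x where x: "x \<in> A" "compl x \<in> B" "d = (A - {x}) \<union> (B - {compl x})"
    using assms(1) unfolding is_resolvent_def by blast
  show ?thesis
  proof (cases "lit_true a x")
    case True
    then obtain l where "l \<in> B" "lit_true a l" "l \<noteq> compl x"
      using assms(2) unfolding satisfies_def by fastforce
    then show ?thesis using x unfolding satisfies_def by blast
  next
    case False
    then obtain l where "l \<in> A" "lit_true a l" "l \<noteq> x"
      using assms(2) unfolding satisfies_def by blast
    then show ?thesis using x unfolding satisfies_def by blast
  qed
qed

lemma is_resolvent_subset: "is_resolvent d A B \<Longrightarrow> d \<subseteq> A \<union> B"
  unfolding is_resolvent_def by blast

definition ranked_derivation :: "('v clause \<Rightarrow> nat) \<Rightarrow> 'v clause set \<Rightarrow> 'v clause set \<Rightarrow> bool" where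
  "ranked_derivation \<rho> K D \<longleftrightarrow>
     (\<forall>d\<in>D. \<exists>A\<in>K \<union> D. \<exists>B\<in>K \<union> D. \<rho> A < \<rho> d \<and> \<rho> B < \<rho> d \<and> is_resolvent d A B)"

lemma ranked_derivation_Diff_max_rank:
  assumes "ranked_derivation \<rho> K D" "\<forall>d'\<in>D. \<rho> d' \<le> \<rho> d"
  shows "ranked_derivation \<rho> K (D - {d})"
  unfolding ranked_derivation_def
proof
  fix d' assume "d' \<in> D - {d}"
  then obtain A B where AB: "A \<in> K \<union> D" "B \<in> K \<union> D" "\<rho> A < \<rho> d'" "\<rho> B < \<rho> d'"
      "is_resolvent d' A B"
    using assms(1) unfolding ranked_derivation_def by blast
  moreover have "A \<noteq> d" "B \<noteq> d" using AB \<open>d' \<in> D - {d}\<close> assms(2) by fastforce+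
  ultimately show "\<exists>A\<in>K \<union> (D - {d}). \<exists>B\<in>K \<union> (D - {d}).
      \<rho> A < \<rho> d' \<and> \<rho> B < \<rho> d' \<and> is_resolvent d' A B"
    by blast
qed

lemma card_insert2_Diff_le:
  assumes "finite C" "d \<in> C"
  shows "card (insert A (insert B (C - {d}))) \<le> card C + 1"
proof -
  have "card (insert A (insert B (C - {d}))) \<le> card (C - {d}) + 2"
    using assms(1) by (simp add: card_insert_if)
  moreover have "card C > 0" using assms card_gt_0_iff by blast
  ultimately show ?thesis using assms by simp
qed

lemma ranked_derivation_entails:
  assumes "ranked_derivation \<rho> K D" "finite D" "finite C" "C \<subseteq> K \<union> D"
  shows "\<exists>S\<subseteq>K. finite S \<and> card S \<le> card D + card C \<and> (\<forall>a. satisfies a S \<longrightarrow> satisfies a C)"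
  using assms
proof (induction "card D" arbitrary: D C)
  case 0
  then show ?case by auto
next
  case (Suc m)
  then have "D \<noteq> {}" by auto
  then have "Max (\<rho> ` D) \<in> \<rho> ` D" using Suc.prems(2) by simp
  then obtain d where d: "d \<in> D" "\<rho> d = Max (\<rho> ` D)" by auto
  then have max: "\<forall>d'\<in>D. \<rho> d' \<le> \<rho> d" using Suc.prems(2) by simp
  obtain A B where AB: "A \<in> K \<union> D" "B \<in> K \<union> D" "\<rho> A < \<rho> d" "\<rho> B < \<rho> d"
      "is_resolvent d A B"
    using Suc.prems(1) d(1) unfolding ranked_derivation_def by blast
  define C' where "C' = (if d \<in> C then insert A (insert B (C - {d})) else C)"
  have m: "m = card (D - {d})" using Suc.hyps(2) d(1) by simp
  have rd: "ranked_derivation \<rho> K (D - {d})"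
    using ranked_derivation_Diff_max_rank[OF Suc.prems(1) max] .
  have sub: "C' \<subseteq> K \<union> (D - {d})"
    using AB Suc.prems(4) unfolding C'_def by auto
  have fin: "finite C'" using Suc.prems(3) unfolding C'_def by simp
  obtain S where S: "S \<subseteq> K" "finite S" "card S \<le> card (D - {d}) + card C'"
      "\<forall>a. satisfies a S \<longrightarrow> satisfies a C'"
    using Suc.hyps(1)[OF m rd _ fin sub] Suc.prems(2) by blast
  have "card C' \<le> card C + 1"
    using card_insert2_Diff_le[OF Suc.prems(3)] unfolding C'_def by simp
  then have "card S \<le> card D + card C" using S(3) m Suc.hyps(2) by linarith
  moreover have "satisfies a C" if "satisfies a C'" for a
  proof (cases "d \<in> C")
    case True
    then have "satisfies a {A, B}" "satisfies a (C - {d})" using that unfolding C'_def by auto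
    moreover have "\<exists>l\<in>d. lit_true a l"
      using is_resolvent_sound[OF AB(5)] calculation(1) by simp
    ultimately show ?thesis using True by (metis insert_Diff satisfies_insert)
  next
    case False
    then show ?thesis using that unfolding C'_def by simp
  qed
  ultimately show ?case using S by blast
qed

lemma frontier_subclause:
  assumes "finite K" "s \<in> K"
  shows "\<exists>w\<in>frontier K. w \<subseteq> s"
proof -
  have "finite {w \<in> K. w \<subseteq> s}" "s \<in> {w \<in> K. w \<subseteq> s}" using assms by auto
  from finite_has_minimal2[OF this] obtain w where
    w: "w \<in> K" "w \<subseteq> s" "\<forall>w'\<in>{w \<in> K. w \<subseteq> s}. w' \<subseteq> w \<longrightarrow> w = w'"
    by blast
  have "w \<in> frontier K"
    unfolding frontier_def using w by auto
  then show ?thesis using w(2) by blast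
qed

lemma unsatisfiable_subclauses:
  assumes "unsatisfiable S" "\<And>s. s \<in> S \<Longrightarrow> f s \<subseteq> s"
  shows "unsatisfiable (f ` S)"
proof -
  have "satisfies a S" if sat: "satisfies a (f ` S)" for a
    unfolding satisfies_def
  proof
    fix s assume "s \<in> S"
    then obtain l where "l \<in> f s" "lit_true a l" using sat unfolding satisfies_def by blast
    then show "\<exists>l\<in>s. lit_true a l" using assms(2) \<open>s \<in> S\<close> by blast
  qed
  then show ?thesis using assms(1) unfolding unsatisfiable_iff_satisfies by blast
qed

lemma unsatisfiable_frontier_subset:
  assumes "finite K" "S \<subseteq> K" "finite S" "unsatisfiable S"
  obtains S' where "S' \<subseteq> frontier K" "unsatisfiable S'" "card S' \<le> card S"
proof -
  have "\<forall>s\<in>S. \<exists>w. w \<in> frontier K \<and> w \<subseteq> s"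
    using frontier_subclause[OF assms(1)] assms(2) by blast
  then obtain f where f: "\<And>s. s \<in> S \<Longrightarrow> f s \<in> frontier K \<and> f s \<subseteq> s"
    by (metis bchoice)
  show ?thesis
  proof
    show "f ` S \<subseteq> frontier K" using f by blast
    show "unsatisfiable (f ` S)" using unsatisfiable_subclauses[OF assms(4)] f by blast
    show "card (f ` S) \<le> card S" using assms(3) by (rule card_image_le)
  qed
qed

definition layer_rank :: "(nat \<Rightarrow> 'v clause set) \<Rightarrow> 'v clause \<Rightarrow> nat" where
  "layer_rank L w = (LEAST j. w \<in> L j)"

lemma layer_list_resolvent:
  assumes "layer_list F L n" "1 \<le> j" "j \<le> n" "w \<in> L j"
  obtains A B i where "A \<in> L (j - 1)" "i < j" "B \<in> L i" "is_resolvent w A B"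
  using assms unfolding layer_list_def by blast

lemma layer_list_clause_subset:
  assumes "layer_list F L n" "j \<le> n" "w \<in> L j"
  shows "w \<subseteq> \<Union>F"
  using assms(2,3)
proof (induction j arbitrary: w rule: less_induct)
  case (less j)
  show ?case
  proof (cases "j = 0")
    case True
    then show ?thesis using less.prems assms(1) unfolding layer_list_def by auto
  next
    case False
    then have "1 \<le> j" by simp
    then obtain A B i where AB: "A \<in> L (j - 1)" "i < j" "B \<in> L i" "is_resolvent w A B"
      using layer_list_resolvent[OF assms(1) _ less.prems] by blast
    have "A \<subseteq> \<Union>F" using less.IH[of "j - 1" A] AB(1) \<open>1 \<le> j\<close> less.prems(1) by simp
    moreover have "B \<subseteq> \<Union>F" using less.IH[of i B] AB(2,3) less.prems(1) by simp
    ultimately show ?thesis using is_resolvent_subset[OF AB(4)] by blast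
  qed
qed

lemma layer_list_finite:
  assumes "is_formula F" "layer_list F L n"
  shows "finite (\<Union>j\<le>n. L j)"
proof -
  have "finite (\<Union>F)" using assms(1) unfolding is_formula_def is_clause_def by blast
  moreover have "(\<Union>j\<le>n. L j) \<subseteq> Pow (\<Union>F)" using layer_list_clause_subset[OF assms(2)] by blast
  ultimately show ?thesis by (metis finite_Pow_iff finite_subset)
qed

lemma layer_list_ranked_derivation:
  assumes "layer_list F L n" "F \<subseteq> K" "K \<subseteq> (\<Union>j\<le>n. L j)"
  shows "ranked_derivation (layer_rank L) K ((\<Union>j\<le>n. L j) - K)"
  unfolding ranked_derivation_def
proof
  let ?U = "\<Union>j\<le>n. L j"
  fix d assume "d \<in> ?U - K"
  then obtain j0 where j0: "j0 \<le> n" "d \<in> L j0" "d \<notin> K" by blast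
  define j where "j = layer_rank L d"
  have "d \<in> L j" "j \<le> j0" using j0 unfolding j_def layer_rank_def by (metis LeastI Least_le)+
  moreover have "j \<noteq> 0" using \<open>d \<in> L j\<close> j0(3) assms(1,2) unfolding layer_list_def by auto
  ultimately obtain A B i where AB: "A \<in> L (j - 1)" "i < j" "B \<in> L i" "is_resolvent d A B"
    using layer_list_resolvent[OF assms(1)] j0(1) by (metis le_trans less_one not_less)
  have "layer_rank L A < j" "layer_rank L B < j"
    using AB \<open>j \<noteq> 0\<close> unfolding layer_rank_def by (metis Least_le diff_less le_less_trans
        less_one zero_less_iff_neq_zero)+
  moreover have "A \<in> ?U" "B \<in> ?U" using AB \<open>j \<le> j0\<close> j0(1) by auto
  ultimately show "\<exists>A\<in>K \<union> (?U - K). \<exists>B\<in>K \<union> (?U - K).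
      layer_rank L A < layer_rank L d \<and> layer_rank L B < layer_rank L d \<and> is_resolvent d A B"
    using AB(4) unfolding j_def by blast
qed

lemma compatible_proof_Known_bounds:
  assumes "compatible_proof F Prev Cur Next Forg L n"
  shows "F \<subseteq> Known Prev Cur Next" "Known Prev Cur Next \<subseteq> (\<Union>j\<le>n. L j)"
proof -
  obtain k where k: "k < n" "L k = Cur" "(\<Union>i<k. L i) = Prev" "Next \<subseteq> L (k + 1)"
    and "L 0 = F"
    using assms unfolding compatible_proof_def layer_list_def by blast
  then show "F \<subseteq> Known Prev Cur Next"
    unfolding Known_def by (cases "k = 0") auto
  show "Known Prev Cur Next \<subseteq> (\<Union>j\<le>n. L j)"
    unfolding Known_def using k by (fastforce simp: Suc_leI)
qed

theorem lemma2:
  fixes F Prev Cur Next Forg :: "'v clause set"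
    and L :: "nat \<Rightarrow> 'v clause set" and n :: nat
  assumes "is_formula F"
    and "unsatisfiable F"
    and "\<exists>L' n'. compatible_proof F Prev Cur Next Forg L' n'"
    and "compatible_proof F Prev Cur Next Forg L n"
  shows "card ((\<Union>j\<le>n. L j) - Known Prev Cur Next) \<ge>
         Min {card S - 1 | S. S \<subseteq> frontier (Known Prev Cur Next) \<and> unsatisfiable S}"
proof -
  let ?U = "\<Union>j\<le>n. L j" and ?K = "Known Prev Cur Next"
  have layers: "layer_list F L n" using assms(4) unfolding compatible_proof_def by blast
  note K = compatible_proof_Known_bounds[OF assms(4)]
  have finU: "finite ?U" using layer_list_finite[OF assms(1) layers] .
  have finK: "finite ?K" using finite_subset[OF K(2) finU] .
  have "{} \<in> ?U" using layers unfolding layer_list_def by auto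
  then obtain S where S: "S \<subseteq> ?K" "finite S" "card S \<le> card (?U - ?K) + 1"
      "\<forall>a. satisfies a S \<longrightarrow> satisfies a {{}}"
    using ranked_derivation_entails[OF layer_list_ranked_derivation[OF layers K] _ _,
        of "{{}}"] finU by auto
  have "unsatisfiable S" using S(4) unfolding unsatisfiable_iff_satisfies by simp
  then obtain S' where S': "S' \<subseteq> frontier ?K" "unsatisfiable S'" "card S' \<le> card S"
    using unsatisfiable_frontier_subset[OF finK S(1,2)] by blast
  have "finite {card S - 1 | S. S \<subseteq> frontier ?K \<and> unsatisfiable S}"
    using finK unfolding frontier_def by simp
  then have "Min {card S - 1 | S. S \<subseteq> frontier ?K \<and> unsatisfiable S} \<le> card S' - 1"
    using S'(1,2) by (intro Min_le) blast+
  also have "\<dots> \<le> card (?U - ?K)" using S(3) S'(3) by simp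
  finally show ?thesis .
qed

end
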